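(* Let $D$ be a division ring with center $F$. Then either $D$ has a maximal subring, or no element $\alpha\in D\setminus F$ is algebraic over $F$.
   Context: All rings are associative unital and subrings share the identity. A maximal subring of a ring $T$ is a proper subring maximal under inclusion among proper subrings of $T$. *)

theory Defs
  imports Main
begin

definition is_subring :: "'a::ring_1 set \<Rightarrow> bool" where
  "is_subring S \<longleftrightarrow> 1 \<in> S \<and> (\<forall>x\<in>S. \<forall>y\<in>S. x - y \<in> S \<and> x * y \<in> S)"

definition maximal_subring :: "'a::ring_1 set \<Rightarrow> bool" where
  "maximal_subring S \<longleftrightarrow> is_subring S \<and> S \<noteq> UNIV \<and>
     (\<forall>T. is_subring T \<and> S \<subseteq> T \<and> T \<noteq> UNIV \<longrightarrow> T = S)"

definition ring_center :: "'a::ring_1 set" where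
  "ring_center = {z. \<forall>x. z * x = x * z}"

text \<open>a is algebraic over K: root of a nonzero polynomial with coefficients in K
  (coefficients written on the left; for central K this is the usual notion).\<close>
definition algebraic_over :: "'a::ring_1 set \<Rightarrow> 'a \<Rightarrow> bool" where
  "algebraic_over K a \<longleftrightarrow> (\<exists>(n::nat) c. (\<exists>i\<le>n. c i \<noteq> 0) \<and> (\<forall>i\<le>n. c i \<in> K) \<and>
       (\<Sum>i\<le>n. c i * a ^ i) = 0)"

end

theory Submission
  imports Defs
begin

text \<open>
  Let \<open>\<alpha> \<notin> F\<close> be algebraic over the centre \<open>F\<close>, with minimal polynomial \<open>p\<close> of degree \<open>n\<close>.
  Substituting left and right multiplication by \<open>\<alpha>\<close> into the divided difference
  \<open>(p(X) - p(Y)) / (X - Y)\<close> gives an additive map \<open>\<Delta>\<close> from \<open>D\<close> into the centralizer \<open>C\<close> of \<open>\<alpha>\<close>.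
  A minimal-support argument in the \<open>D\<close>-\<open>D\<close>-bimodule generated by \<open>(1, \<alpha>, \<dots>, \<alpha>\<^sup>n\<^sup>-\<^sup>1)\<close>
  yields pairs \<open>(u\<^sub>k, v\<^sub>k)\<close> such that the elements \<open>\<Sum>\<^sub>k u\<^sub>k \<alpha>\<^sup>i v\<^sub>k\<close> are central and not all zero.
  Linear independence of \<open>1, \<alpha>, \<dots>, \<alpha>\<^sup>n\<^sup>-\<^sup>1\<close> over \<open>F\<close> then gives \<open>m \<noteq> 0\<close> with
  \<open>\<Sum>\<^sub>k u\<^sub>k \<Delta>(v\<^sub>k y) = y m\<close> for all \<open>y\<close>. Hence \<open>D\<close> is generated by the proper subring \<open>C\<close>
  together with the finitely many \<open>u\<^sub>k\<close>, and Zorn's lemma gives a maximal subring containing \<open>C\<close>.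
\<close>

lemma ring_centerI: "(\<And>x. z * x = x * z) \<Longrightarrow> z \<in> ring_center"
  unfolding ring_center_def by blast

lemma ring_centerD: "z \<in> ring_center \<Longrightarrow> z * x = x * z"
  unfolding ring_center_def by blast

lemma zero_in_ring_center: "0 \<in> ring_center"
  by (simp add: ring_centerI)

lemma mult_in_ring_center:
  assumes "x \<in> ring_center" "y \<in> ring_center"
  shows "x * y \<in> ring_center"
proof (rule ring_centerI)
  fix z
  have "x * y * z = (x * z) * y" by (simp add: mult.assoc ring_centerD[OF assms(2)])
  also have "\<dots> = z * (x * y)" by (simp add: mult.assoc ring_centerD[OF assms(1)])
  finally show "x * y * z = z * (x * y)" .
qed

lemma sum_in_ring_center: "(\<And>i. i \<in> I \<Longrightarrow> f i \<in> ring_center) \<Longrightarrow> sum f I \<in> ring_center"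
  by (rule ring_centerI) (simp add: sum_distrib_left sum_distrib_right ring_centerD)

lemma inverse_in_ring_center:
  fixes x :: "'a::division_ring"
  assumes "x \<in> ring_center"
  shows "inverse x \<in> ring_center"
proof (cases "x = 0")
  case False
  show ?thesis
  proof (rule ring_centerI)
    fix y
    have "inverse x * y = inverse x * (y * x) * inverse x"
      using False by (simp add: mult.assoc)
    also have "\<dots> = inverse x * (x * y) * inverse x"
      by (simp only: ring_centerD[OF assms])
    also have "\<dots> = y * inverse x"
      using False by (simp add: mult.assoc[symmetric])
    finally show "inverse x * y = y * inverse x" .
  qed
qed (simp add: zero_in_ring_center)

lemma is_subring_zero: "is_subring S \<Longrightarrow> 0 \<in> S"
  unfolding is_subring_def by (metis diff_self)

lemma is_subring_add:
  assumes "is_subring S" "x \<in> S" "y \<in> S"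
  shows "x + y \<in> S"
proof -
  have "0 - y \<in> S" using assms is_subring_zero unfolding is_subring_def by blast
  then have "x - (0 - y) \<in> S" using assms unfolding is_subring_def by blast
  then show ?thesis by simp
qed

lemma is_subring_mult: "is_subring S \<Longrightarrow> x \<in> S \<Longrightarrow> y \<in> S \<Longrightarrow> x * y \<in> S"
  unfolding is_subring_def by blast

lemma is_subring_sum_list:
  "is_subring S \<Longrightarrow> (\<And>x. x \<in> set xs \<Longrightarrow> f x \<in> S) \<Longrightarrow> (\<Sum>x\<leftarrow>xs. f x) \<in> S"
  by (induction xs) (auto simp: is_subring_zero is_subring_add)

lemma is_subring_Union_chain:
  assumes "\<C> \<noteq> {}" "\<And>S. S \<in> \<C> \<Longrightarrow> is_subring S"
    and chain: "\<And>S T. S \<in> \<C> \<Longrightarrow> T \<in> \<C> \<Longrightarrow> S \<subseteq> T \<or> T \<subseteq> S"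
  shows "is_subring (\<Union>\<C>)"
  unfolding is_subring_def
proof (intro conjI ballI)
  show "1 \<in> \<Union>\<C>" using assms(1,2) unfolding is_subring_def by blast
  fix x y assume "x \<in> \<Union>\<C>" "y \<in> \<Union>\<C>"
  then obtain S where "S \<in> \<C>" "x \<in> S" "y \<in> S" using chain by blast
  then show "x - y \<in> \<Union>\<C>" "x * y \<in> \<Union>\<C>" using assms(2) unfolding is_subring_def by blast+
qed

lemma maximal_subring_above:
  assumes "is_subring C" "C \<noteq> UNIV" "finite U"
    and generates: "\<And>T. is_subring T \<Longrightarrow> C \<subseteq> T \<Longrightarrow> U \<subseteq> T \<Longrightarrow> T = UNIV"
  shows "\<exists>S. maximal_subring S \<and> C \<subseteq> S"
proof -
  \<comment> \<open>Finiteness of \<open>U\<close> keeps the union of a chain in \<open>\<A>\<close>.\<close>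
  define \<A> where "\<A> = {T. is_subring T \<and> C \<subseteq> T \<and> \<not> U \<subseteq> T}"
  have "\<exists>M\<in>\<A>. \<forall>T\<in>\<A>. M \<subseteq> T \<longrightarrow> T = M"
  proof (rule subset_Zorn_nonempty)
    show "\<A> \<noteq> {}" using assms unfolding \<A>_def by blast
    fix \<C> assume "\<C> \<noteq> {}" and chain: "subset.chain \<A> \<C>"
    have "\<C> \<subseteq> \<A>" and comparable: "\<And>S T. S \<in> \<C> \<Longrightarrow> T \<in> \<C> \<Longrightarrow> S \<subseteq> T \<or> T \<subseteq> S"
      using chain unfolding subset_chain_def by auto
    have "is_subring S" if "S \<in> \<C>" for S using that \<open>\<C> \<subseteq> \<A>\<close> unfolding \<A>_def by blast
    then have "is_subring (\<Union>\<C>)" by (rule is_subring_Union_chain[OF \<open>\<C> \<noteq> {}\<close> _ comparable])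
    moreover have "\<not> U \<subseteq> \<Union>\<C>"
    proof
      assume "U \<subseteq> \<Union>\<C>"
      then obtain S where "S \<in> \<C>" "U \<subseteq> S"
        using finite_subset_Union_chain[OF \<open>finite U\<close> _ \<open>\<C> \<noteq> {}\<close> chain] by blast
      then show False using \<open>\<C> \<subseteq> \<A>\<close> unfolding \<A>_def by blast
    qed
    moreover have "C \<subseteq> \<Union>\<C>" using \<open>\<C> \<noteq> {}\<close> \<open>\<C> \<subseteq> \<A>\<close> unfolding \<A>_def by blast
    ultimately show "\<Union>\<C> \<in> \<A>" unfolding \<A>_def by blast
  qed
  then obtain M where "M \<in> \<A>" and M: "\<And>T. T \<in> \<A> \<Longrightarrow> M \<subseteq> T \<Longrightarrow> T = M" by blast
  have "maximal_subring M"
    unfolding maximal_subring_def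
  proof (intro conjI allI impI)
    show "is_subring M" "M \<noteq> UNIV" using \<open>M \<in> \<A>\<close> unfolding \<A>_def by blast+
    fix T assume "is_subring T \<and> M \<subseteq> T \<and> T \<noteq> UNIV"
    then have "T \<in> \<A>" using \<open>M \<in> \<A>\<close> generates unfolding \<A>_def by blast
    then show "T = M" using M \<open>is_subring T \<and> M \<subseteq> T \<and> T \<noteq> UNIV\<close> by blast
  qed
  then show ?thesis using \<open>M \<in> \<A>\<close> unfolding \<A>_def by blast
qed

definition centralizer :: "'a::ring_1 \<Rightarrow> 'a set" where
  "centralizer a = {x. a * x = x * a}"

lemma is_subring_centralizer: "is_subring (centralizer a)"
  unfolding is_subring_def centralizer_def
  by (simp add: algebra_simps) (metis mult.assoc)

lemma centralizer_eq_UNIV_iff: "centralizer a = UNIV \<longleftrightarrow> a \<in> ring_center"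
  unfolding centralizer_def ring_center_def by auto

lemma algebraic_over_least_degree:
  fixes \<alpha> :: "'a::ring_1"
  assumes "algebraic_over K \<alpha>"
  obtains n c where "\<exists>i\<le>n. c i \<noteq> 0" "\<forall>i\<le>n. c i \<in> K" "(\<Sum>i\<le>n. c i * \<alpha> ^ i) = 0"
    and "\<And>b. (\<forall>j<n. b j \<in> K) \<Longrightarrow> (\<Sum>j<n. b j * \<alpha> ^ j) = 0 \<Longrightarrow> \<forall>j<n. b j = 0"
proof -
  define relation where "relation d \<longleftrightarrow>
    (\<exists>c. (\<exists>i\<le>d. c i \<noteq> 0) \<and> (\<forall>i\<le>d. c i \<in> K) \<and> (\<Sum>i\<le>d. c i * \<alpha> ^ i) = 0)" for d
  define n where "n = (LEAST d. relation d)"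
  have "relation n"
    unfolding n_def by (rule LeastI_ex) (use assms in \<open>auto simp: relation_def algebraic_over_def\<close>)
  then obtain c where "\<exists>i\<le>n. c i \<noteq> 0" "\<forall>i\<le>n. c i \<in> K" "(\<Sum>i\<le>n. c i * \<alpha> ^ i) = 0"
    unfolding relation_def by blast
  moreover have "\<forall>j<n. b j = 0" if "\<forall>j<n. b j \<in> K" "(\<Sum>j<n. b j * \<alpha> ^ j) = 0" for b
  proof (rule ccontr)
    assume "\<not> (\<forall>j<n. b j = 0)"
    then have "0 < n" "{..n - 1} = {..<n}" by auto
    then have "relation (n - 1)"
      using that \<open>\<not> (\<forall>j<n. b j = 0)\<close> unfolding relation_def
      by (intro exI[of _ b]) auto
    then have "n \<le> n - 1" unfolding n_def by (rule Least_le)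
    with \<open>0 < n\<close> show False by simp
  qed
  ultimately show thesis by (rule that)
qed

lemma algebraic_over_center_monic_relation:
  fixes \<alpha> :: "'a::division_ring"
  assumes "algebraic_over ring_center \<alpha>"
  obtains n p where "0 < n" "\<And>i. p i \<in> ring_center" "p n = 1" "\<And>i. n < i \<Longrightarrow> p i = 0"
    "(\<Sum>i\<le>n. p i * \<alpha> ^ i) = 0"
    "\<And>b. (\<forall>j<n. b j \<in> ring_center) \<Longrightarrow> (\<Sum>j<n. b j * \<alpha> ^ j) = 0 \<Longrightarrow> \<forall>j<n. b j = 0"
proof -
  obtain n c where nonzero: "\<exists>i\<le>n. c i \<noteq> 0" and central: "\<forall>i\<le>n. c i \<in> ring_center"
    and root: "(\<Sum>i\<le>n. c i * \<alpha> ^ i) = 0"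
    and independent: "\<And>b. (\<forall>j<n. b j \<in> ring_center) \<Longrightarrow> (\<Sum>j<n. b j * \<alpha> ^ j) = 0 \<Longrightarrow> \<forall>j<n. b j = 0"
    using algebraic_over_least_degree[OF assms] by blast
  have lead: "c n \<noteq> 0"
  proof
    assume "c n = 0"
    then have "(\<Sum>j<n. c j * \<alpha> ^ j) = 0"
      using root by (simp add: lessThan_Suc_atMost[symmetric])
    then have "\<forall>j<n. c j = 0" using independent central by simp
    with nonzero \<open>c n = 0\<close> show False using le_neq_implies_less by blast
  qed
  have "0 < n"
    using root lead by (cases n) auto
  define p where "p i = (if i \<le> n then inverse (c n) * c i else 0)" for i
  have "p i \<in> ring_center" for i
    using central by (simp add: p_def zero_in_ring_center mult_in_ring_center inverse_in_ring_center)
  moreover have "p n = 1"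
    using lead by (simp add: p_def)
  moreover have "p i = 0" if "n < i" for i
    using that by (simp add: p_def)
  moreover have "(\<Sum>i\<le>n. p i * \<alpha> ^ i) = 0"
    using root by (simp add: p_def mult.assoc sum_distrib_left[symmetric])
  ultimately show thesis
    using that[OF \<open>0 < n\<close>] independent by blast
qed

text \<open>
  \<open>divdiff p n a y\<close> is \<open>(p(X) - p(Y)) / (X - Y) = \<Sum>\<^sub>i\<^sub>,\<^sub>j p\<^sub>i\<^sub>+\<^sub>j\<^sub>+\<^sub>1 X\<^sup>i Y\<^sup>j\<close> applied to \<open>y\<close>, with \<open>X\<close>
  and \<open>Y\<close> acting as left and right multiplication by \<open>a\<close>. Since these commute,
  \<open>a \<Delta>(y) - \<Delta>(y) a = p(a) y - y p(a)\<close>, which vanishes at a root with central coefficients.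
\<close>

definition divdiff_coeff :: "(nat \<Rightarrow> 'a::ring_1) \<Rightarrow> nat \<Rightarrow> 'a \<Rightarrow> nat \<Rightarrow> 'a" where
  "divdiff_coeff p n a i = (\<Sum>j<n. p (i + j + 1) * a ^ j)"

definition divdiff :: "(nat \<Rightarrow> 'a::ring_1) \<Rightarrow> nat \<Rightarrow> 'a \<Rightarrow> 'a \<Rightarrow> 'a" where
  "divdiff p n a y = (\<Sum>i<n. a ^ i * y * divdiff_coeff p n a i)"

lemma divdiff_commutes:
  fixes a :: "'a::ring_1"
  assumes central: "\<And>i. p i \<in> ring_center" and degree: "\<And>i. n < i \<Longrightarrow> p i = 0"
    and root: "(\<Sum>i\<le>n. p i * a ^ i) = 0"
  shows "a * divdiff p n a y = divdiff p n a y * a"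
proof -
  define G where "G i = (\<Sum>j\<le>n. p (i + j) * a ^ j)" for i
  have G_Suc: "G (Suc i) = divdiff_coeff p n a i" for i
    using degree[of "Suc i + n"]
    by (simp add: G_def divdiff_coeff_def lessThan_Suc_atMost[symmetric])
  have coeff_times: "divdiff_coeff p n a i * a = G i - p i" for i
  proof -
    have "G i = p i + (\<Sum>j<n. p (i + Suc j) * a ^ Suc j)"
      unfolding G_def lessThan_Suc_atMost[symmetric] by (subst sum.lessThan_Suc_shift) simp
    also have "(\<Sum>j<n. p (i + Suc j) * a ^ Suc j) = divdiff_coeff p n a i * a"
      by (simp add: divdiff_coeff_def sum_distrib_right mult.assoc power_commutes)
    finally show ?thesis by simp
  qed
  have "G 0 = 0" using root by (simp add: G_def)
  have "G n = p n"
    unfolding G_def using degree by (subst sum.atMost_shift) simp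
  define f where "f i = a ^ i * y * G i" for i
  have "a * divdiff p n a y - divdiff p n a y * a
      = (\<Sum>i<n. f (Suc i)) - (\<Sum>i<n. f i) + (\<Sum>i<n. a ^ i * y * p i)"
    by (simp add: divdiff_def f_def G_Suc coeff_times sum_distrib_left sum_distrib_right
        mult.assoc right_diff_distrib sum_subtractf)
  also have "\<dots> = (\<Sum>i\<le>n. a ^ i * y * p i)"
    using sum_lessThan_telescope[of f n] \<open>G 0 = 0\<close> \<open>G n = p n\<close>
    by (simp add: f_def lessThan_Suc_atMost[symmetric] sum_subtractf)
  also have "\<dots> = (\<Sum>i\<le>n. p i * a ^ i) * y"
    unfolding sum_distrib_right
    by (intro sum.cong refl) (metis mult.assoc ring_centerD[OF central])
  finally show ?thesis using root by simp
qed

definition sandwich_sum :: "'a::ring_1 \<Rightarrow> ('a \<times> 'a) list \<Rightarrow> nat \<Rightarrow> 'a" where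
  "sandwich_sum a ps i = (\<Sum>(u, v)\<leftarrow>ps. u * a ^ i * v)"

lemma sandwich_sum_mult_left:
  "sandwich_sum a (map (\<lambda>(u, v). (d * u, v)) ps) i = d * sandwich_sum a ps i"
  by (induction ps) (auto simp: sandwich_sum_def algebra_simps)

lemma sandwich_sum_minus_mult_right:
  "sandwich_sum a (map (\<lambda>(u, v). (- u, v * d)) ps) i = - (sandwich_sum a ps i * d)"
  by (induction ps) (auto simp: sandwich_sum_def algebra_simps)

lemma sandwich_sum_append:
  "sandwich_sum a (ps @ qs) i = sandwich_sum a ps i + sandwich_sum a qs i"
  by (simp add: sandwich_sum_def)

lemma sandwich_sum_commutator:
  "sandwich_sum a (map (\<lambda>(u, v). (d * u, v)) ps @ map (\<lambda>(u, v). (- u, v * d)) ps) i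
    = d * sandwich_sum a ps i - sandwich_sum a ps i * d"
  by (simp add: sandwich_sum_append sandwich_sum_mult_left sandwich_sum_minus_mult_right)

lemma sum_list_mult_divdiff:
  assumes "\<And>i. i < n \<Longrightarrow> sandwich_sum a ps i \<in> ring_center"
  shows "(\<Sum>(u, v)\<leftarrow>ps. u * divdiff p n a (v * y))
    = y * (\<Sum>i<n. sandwich_sum a ps i * divdiff_coeff p n a i)"
proof -
  have "(\<Sum>(u, v)\<leftarrow>ps. u * divdiff p n a (v * y))
      = (\<Sum>(u, v)\<leftarrow>ps. \<Sum>i<n. u * a ^ i * v * (y * divdiff_coeff p n a i))"
    unfolding divdiff_def by (intro arg_cong[where f = sum_list] map_cong)
      (auto simp: sum_distrib_left mult.assoc)
  also have "\<dots> = (\<Sum>i<n. sandwich_sum a ps i * (y * divdiff_coeff p n a i))"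
    unfolding sandwich_sum_def by (induction ps) (auto simp: sum.distrib[symmetric] distrib_right)
  also have "\<dots> = y * (\<Sum>i<n. sandwich_sum a ps i * divdiff_coeff p n a i)"
    unfolding sum_distrib_left
    by (intro sum.cong refl) (metis assms lessThan_iff mult.assoc ring_centerD)
  finally show ?thesis .
qed

lemma bimodule_has_central_vector:
  fixes W :: "(nat \<Rightarrow> 'a::division_ring) set"
  assumes scale: "\<And>f d. f \<in> W \<Longrightarrow> (\<lambda>i. d * f i) \<in> W"
    and commutator: "\<And>f d. f \<in> W \<Longrightarrow> (\<lambda>i. d * f i - f i * d) \<in> W"
    and "f \<in> W" "k < n" "f k \<noteq> 0"
  obtains g i\<^sub>0 where "g \<in> W" "i\<^sub>0 < n" "g i\<^sub>0 = 1" "\<And>i. i < i\<^sub>0 \<Longrightarrow> g i = 0"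
    "\<And>i. i < n \<Longrightarrow> g i \<in> ring_center"
proof -
  define support where "support g = {i. i < n \<and> g i \<noteq> 0}" for g :: "nat \<Rightarrow> 'a"
  have finite_support: "finite (support g)" for g
    unfolding support_def by simp
  obtain h where "h \<in> W" "support h \<noteq> {}"
    and minimal: "\<And>g. g \<in> W \<Longrightarrow> support g \<noteq> {} \<Longrightarrow> card (support h) \<le> card (support g)"
    using ex_has_least_nat[of "\<lambda>g. g \<in> W \<and> support g \<noteq> {}" f "\<lambda>g. card (support g)"] assms(3-5)
    unfolding support_def by blast
  \<comment> \<open>Normalised at its first nonzero entry, a vector of minimal support has commutators of
    strictly smaller support, so they vanish.\<close>
  define i\<^sub>0 where "i\<^sub>0 = Min (support h)"
  have "i\<^sub>0 \<in> support h"
    unfolding i\<^sub>0_def using finite_support \<open>support h \<noteq> {}\<close> by (rule Min_in)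
  define g where "g i = inverse (h i\<^sub>0) * h i" for i
  have "g \<in> W" unfolding g_def using \<open>h \<in> W\<close> by (rule scale)
  have "support g = support h" "g i\<^sub>0 = 1"
    using \<open>i\<^sub>0 \<in> support h\<close> by (auto simp: support_def g_def)
  have below: "g i = 0" if "i < i\<^sub>0" for i
  proof (rule ccontr)
    assume "g i \<noteq> 0"
    then have "i \<in> support h"
      using that \<open>i\<^sub>0 \<in> support h\<close> by (auto simp: support_def g_def)
    then have "i\<^sub>0 \<le> i" unfolding i\<^sub>0_def by (rule Min_le[OF finite_support])
    with that show False by simp
  qed
  have central: "g i \<in> ring_center" if "i < n" for i
  proof (rule ring_centerI)
    fix d
    define c where "c j = d * g j - g j * d" for j
    have "c \<in> W" unfolding c_def using \<open>g \<in> W\<close> by (rule commutator)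
    have "support c \<subseteq> support g - {i\<^sub>0}"
      using \<open>g i\<^sub>0 = 1\<close> by (auto simp: support_def c_def)
    then have "support c \<subset> support h"
      using \<open>i\<^sub>0 \<in> support h\<close> \<open>support g = support h\<close> by blast
    then have "card (support c) < card (support h)"
      by (rule psubset_card_mono[OF finite_support])
    then have "support c = {}" using minimal[OF \<open>c \<in> W\<close>] by linarith
    then show "g i * d = d * g i" using that by (auto simp: support_def c_def)
  qed
  have "i\<^sub>0 < n" using \<open>i\<^sub>0 \<in> support h\<close> by (simp add: support_def)
  show thesis by (rule that[OF \<open>g \<in> W\<close> \<open>i\<^sub>0 < n\<close> \<open>g i\<^sub>0 = 1\<close> below central])
qed

lemma central_sandwich_sum:
  fixes a :: "'a::division_ring"
  assumes "0 < n"
  obtains ps i\<^sub>0 where "i\<^sub>0 < n" "sandwich_sum a ps i\<^sub>0 = 1" "\<And>i. i < i\<^sub>0 \<Longrightarrow> sandwich_sum a ps i = 0"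
    "\<And>i. i < n \<Longrightarrow> sandwich_sum a ps i \<in> ring_center"
proof -
  have scale: "(\<lambda>i. d * f i) \<in> range (sandwich_sum a)" if "f \<in> range (sandwich_sum a)" for f d
  proof -
    from that obtain ps where "f = sandwich_sum a ps" by blast
    then have "(\<lambda>i. d * f i) = sandwich_sum a (map (\<lambda>(u, v). (d * u, v)) ps)"
      by (simp add: fun_eq_iff sandwich_sum_mult_left)
    then show ?thesis by simp
  qed
  have commutator: "(\<lambda>i. d * f i - f i * d) \<in> range (sandwich_sum a)"
    if "f \<in> range (sandwich_sum a)" for f d
  proof -
    from that obtain ps where "f = sandwich_sum a ps" by blast
    then have "(\<lambda>i. d * f i - f i * d)
        = sandwich_sum a (map (\<lambda>(u, v). (d * u, v)) ps @ map (\<lambda>(u, v). (- u, v * d)) ps)"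
      by (simp add: fun_eq_iff sandwich_sum_commutator)
    then show ?thesis by simp
  qed
  have "sandwich_sum a [(1, 1)] 0 \<noteq> 0"
    by (simp add: sandwich_sum_def)
  obtain g i\<^sub>0 where "g \<in> range (sandwich_sum a)" "i\<^sub>0 < n" "g i\<^sub>0 = 1"
    "\<And>i. i < i\<^sub>0 \<Longrightarrow> g i = 0" "\<And>i. i < n \<Longrightarrow> g i \<in> ring_center"
    using bimodule_has_central_vector[OF scale commutator rangeI assms \<open>sandwich_sum a [(1, 1)] 0 \<noteq> 0\<close>]
    by blast
  moreover from this(1) obtain ps where "g = sandwich_sum a ps" by blast
  ultimately show thesis using that by blast
qed

lemma divdiff_pairing_nonzero:
  fixes a :: "'a::ring_1"
  assumes central: "\<And>i. p i \<in> ring_center" and monic: "p n = 1"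
    and degree: "\<And>i. n < i \<Longrightarrow> p i = 0"
    and independent: "\<And>b. (\<forall>j<n. b j \<in> ring_center) \<Longrightarrow> (\<Sum>j<n. b j * a ^ j) = 0 \<Longrightarrow> \<forall>j<n. b j = 0"
    and t_central: "\<And>i. i < n \<Longrightarrow> t i \<in> ring_center"
    and "i\<^sub>0 < n" "t i\<^sub>0 = 1" and below: "\<And>i. i < i\<^sub>0 \<Longrightarrow> t i = 0"
  shows "(\<Sum>i<n. t i * divdiff_coeff p n a i) \<noteq> 0"
proof
  assume zero: "(\<Sum>i<n. t i * divdiff_coeff p n a i) = 0"
  define b where "b j = (\<Sum>i<n. t i * p (i + j + 1))" for j
  have "(\<Sum>i<n. t i * divdiff_coeff p n a i) = (\<Sum>j<n. b j * a ^ j)"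
    unfolding divdiff_coeff_def b_def sum_distrib_left sum_distrib_right
    by (subst sum.swap) (simp add: mult.assoc)
  moreover have "b j \<in> ring_center" for j
    unfolding b_def by (auto intro!: sum_in_ring_center mult_in_ring_center t_central central)
  ultimately have "\<forall>j<n. b j = 0"
    using independent zero by simp
  moreover have "b (n - 1 - i\<^sub>0) = 1"
  proof -
    have "b (n - 1 - i\<^sub>0) = (\<Sum>i<n. if i = i\<^sub>0 then 1 else 0)"
      unfolding b_def
    proof (rule sum.cong[OF refl])
      fix i assume "i \<in> {..<n}"
      consider "i < i\<^sub>0" | "i = i\<^sub>0" | "i\<^sub>0 < i" by linarith
      then show "t i * p (i + (n - 1 - i\<^sub>0) + 1) = (if i = i\<^sub>0 then 1 else 0)"
        by cases (use \<open>i\<^sub>0 < n\<close> \<open>t i\<^sub>0 = 1\<close> below monic degree in auto)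
    qed
    also have "\<dots> = 1" using \<open>i\<^sub>0 < n\<close> by simp
    finally show ?thesis .
  qed
  ultimately show False using \<open>i\<^sub>0 < n\<close> by simp
qed

lemma centralizer_finitely_generates:
  fixes \<alpha> :: "'a::division_ring"
  assumes "algebraic_over ring_center \<alpha>"
  obtains U where "finite U" "\<And>T. is_subring T \<Longrightarrow> centralizer \<alpha> \<subseteq> T \<Longrightarrow> U \<subseteq> T \<Longrightarrow> T = UNIV"
proof -
  obtain n p where "0 < n" and central: "\<And>i. p i \<in> ring_center" and monic: "p n = 1"
    and degree: "\<And>i. n < i \<Longrightarrow> p i = 0" and root: "(\<Sum>i\<le>n. p i * \<alpha> ^ i) = 0"
    and independent: "\<And>b. (\<forall>j<n. b j \<in> ring_center) \<Longrightarrow> (\<Sum>j<n. b j * \<alpha> ^ j) = 0 \<Longrightarrow> \<forall>j<n. b j = 0"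
    by (rule algebraic_over_center_monic_relation[OF assms]) (rule that)
  obtain ps i\<^sub>0 where "i\<^sub>0 < n" and normalized: "sandwich_sum \<alpha> ps i\<^sub>0 = 1"
    and below: "\<And>i. i < i\<^sub>0 \<Longrightarrow> sandwich_sum \<alpha> ps i = 0"
    and sandwich_central: "\<And>i. i < n \<Longrightarrow> sandwich_sum \<alpha> ps i \<in> ring_center"
    by (rule central_sandwich_sum[OF \<open>0 < n\<close>]) (rule that)
  define m where "m = (\<Sum>i<n. sandwich_sum \<alpha> ps i * divdiff_coeff p n \<alpha> i)"
  have "m \<noteq> 0"
    unfolding m_def
    by (rule divdiff_pairing_nonzero[where p = p and t = "sandwich_sum \<alpha> ps", OF central monic degree
          independent sandwich_central \<open>i\<^sub>0 < n\<close> normalized below])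
  have divdiff_centralizes: "divdiff p n \<alpha> y \<in> centralizer \<alpha>" for y
    using divdiff_commutes[OF central degree root] by (simp add: centralizer_def)
  have expand: "y = (\<Sum>(u, v)\<leftarrow>ps. u * divdiff p n \<alpha> (v * (y * inverse m)))" for y
    using sum_list_mult_divdiff[OF sandwich_central, where p = p and y = "y * inverse m"] \<open>m \<noteq> 0\<close>
    by (simp add: m_def mult.assoc)
  show thesis
  proof (rule that[of "fst ` set ps"])
    fix T assume T: "is_subring T" "centralizer \<alpha> \<subseteq> T" "fst ` set ps \<subseteq> T"
    have "y \<in> T" for y
    proof (subst expand, rule is_subring_sum_list[OF T(1)])
      fix x assume "x \<in> set ps"
      moreover obtain u v where "x = (u, v)" by fastforce
      ultimately have "u \<in> T" using T(3) by force
      moreover have "divdiff p n \<alpha> (v * (y * inverse m)) \<in> T" using T(2) divdiff_centralizes by blast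
      ultimately show "(case x of (u, v) \<Rightarrow> u * divdiff p n \<alpha> (v * (y * inverse m))) \<in> T"
        using \<open>x = (u, v)\<close> is_subring_mult[OF T(1)] by simp
    qed
    then show "T = UNIV" by blast
  qed simp
qed

theorem corollary2p10:
  shows "(\<exists>S::'a::division_ring set. maximal_subring S) \<or>
         (\<forall>\<alpha>::'a. \<alpha> \<notin> ring_center \<longrightarrow> \<not> algebraic_over ring_center \<alpha>)"
proof -
  have "\<exists>S::'a set. maximal_subring S"
    if noncentral: "\<alpha> \<notin> ring_center" and algebraic: "algebraic_over ring_center \<alpha>" for \<alpha> :: 'a
  proof -
    obtain U where "finite U"
      and "\<And>T. is_subring T \<Longrightarrow> centralizer \<alpha> \<subseteq> T \<Longrightarrow> U \<subseteq> T \<Longrightarrow> T = UNIV"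
      by (rule centralizer_finitely_generates[OF algebraic]) (rule that)
    moreover have "centralizer \<alpha> \<noteq> UNIV"
      using noncentral by (simp add: centralizer_eq_UNIV_iff)
    ultimately show ?thesis
      using maximal_subring_above[OF is_subring_centralizer] by blast
  qed
  then show ?thesis by blast
qed

end
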